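(* Let $\alpha\in(0,1)$, $\beta\in[0,1]$ irrational and $\eta>0$. Then $$\dim_{\mathcal H}\Big(\limsup_{n\to\infty}A_{n,1,\eta}\Big)=0,$$ where $A_{n,1,\eta}=\{x\in[0,1]:\ln(n)\cdot v_{n,1}(x)>\eta\}$ and $\limsup_nA_n=\bigcap_N\bigcup_{n\ge N}A_n$.
   Context: $T_1$ is the Farey map ($T_1(x)=\frac x{1-x}$ for $x\le1/2$, $\frac{1-x}x$ for $x>1/2$) with inverse branches $f_{1,0}(x)=\frac x{1+x}$, $f_{1,1}(x)=\frac1{1+x}$; for $\varphi\in\{0,1\}^n$, $f_{1,\varphi}=f_{1,\varphi_1}\circ\dots\circ f_{1,\varphi_n}$. Itinerary: $\omega_{1,k}(\beta)=0$ if $T_1^{k-1}(\beta)\le1/2$, else $1$; $\omega_1(\beta)|_n=(\omega_{1,1}(\beta),\dots,\omega_{1,n}(\beta))$. With $v_{\beta,\alpha}(x)=|x-\beta|^{-\alpha}$, the $1$-tail is $v_{n,1}(x)=|f_{1,\omega_1(\beta)|_n}'(x)|\cdot v_{\beta,\alpha}(f_{1,\omega_1(\beta)|_n}(x))$. $\dim_{\mathcal H}$ denotes Hausdorff dimension. *)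

theory Defs
  imports "HOL-Analysis.Analysis" "HOL-Library.Extended_Real"
begin

text \<open>Contribution of a single covering set to the s-dimensional sum,
  with the usual conventions: the empty set contributes 0 and (diam U)^0 = 1.\<close>
definition hd_term :: "real \<Rightarrow> 'a::metric_space set \<Rightarrow> ennreal" where
  "hd_term s U = (if U = {} then 0 else if s = 0 then 1 else ennreal (diameter U powr s))"

definition hausdorff_pre :: "real \<Rightarrow> real \<Rightarrow> 'a::metric_space set \<Rightarrow> ennreal" where
  "hausdorff_pre s \<delta> A =
     (INF U \<in> {U :: nat \<Rightarrow> 'a set. A \<subseteq> (\<Union>i. U i) \<and> (\<forall>i. bounded (U i) \<and> diameter (U i) \<le> \<delta>)}.
        (\<Sum>i. hd_term s (U i)))"

definition hausdorff_measure :: "real \<Rightarrow> 'a::metric_space set \<Rightarrow> ennreal" where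
  "hausdorff_measure s A = (SUP \<delta> \<in> {0<..}. hausdorff_pre s \<delta> A)"

definition hausdorff_dim :: "'a::metric_space set \<Rightarrow> real" where
  "hausdorff_dim A = Inf {s. 0 \<le> s \<and> hausdorff_measure s A = 0}"

definition farey_T :: "real \<Rightarrow> real" where
  "farey_T x = (if x \<le> 1/2 then x / (1 - x) else (1 - x) / x)"

definition farey_branch :: "nat \<Rightarrow> real \<Rightarrow> real" where
  "farey_branch j x = (if j = 0 then x / (1 + x) else 1 / (1 + x))"

text \<open>k-th itinerary digit, k >= 1: omega_{1,k}(beta).\<close>
definition farey_digit :: "real \<Rightarrow> nat \<Rightarrow> nat" where
  "farey_digit \<beta> k = (if (farey_T ^^ (k - 1)) \<beta> \<le> 1/2 then 0 else 1)"

text \<open>f_{1,omega_1(beta)|_n} = f_{omega_1} o ... o f_{omega_n}.\<close>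
fun farey_word :: "real \<Rightarrow> nat \<Rightarrow> real \<Rightarrow> real" where
  "farey_word \<beta> 0 = id"
| "farey_word \<beta> (Suc n) = farey_word \<beta> n \<circ> farey_branch (farey_digit \<beta> (Suc n))"

definition v_pot :: "real \<Rightarrow> real \<Rightarrow> real \<Rightarrow> ereal" where
  "v_pot \<beta> \<alpha> x = (if x = \<beta> then \<infinity> else ereal (\<bar>x - \<beta>\<bar> powr (- \<alpha>)))"

definition v_tail :: "real \<Rightarrow> real \<Rightarrow> nat \<Rightarrow> real \<Rightarrow> ereal" where
  "v_tail \<beta> \<alpha> n x = ereal \<bar>deriv (farey_word \<beta> n) x\<bar> * v_pot \<beta> \<alpha> (farey_word \<beta> n x)"

definition A_set :: "real \<Rightarrow> real \<Rightarrow> real \<Rightarrow> nat \<Rightarrow> real set" where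
  "A_set \<beta> \<alpha> \<eta> n = {x \<in> {0..1}. ereal (ln (real n)) * v_tail \<beta> \<alpha> n x > ereal \<eta>}"

end

theory Submission
  imports Defs
begin

(* Write x_n = T_1^n(beta) for the Farey orbit of beta and Q_n for the (affine) denominator of
   the Farey word f_{1,omega_1(beta)|n}, so that |f'(x)| = Q_n(x)^(-2) and f(x_n) = beta.
   On A_n, away from a boundary interval [0, theta], the tail can only exceed eta / ln n when
   |x - x_n| <= R_n, where R_n ~ Q_n(1)^((alpha-1)/alpha) tends to 0. Windows around orbit points
   near 0 or 1 are absorbed in [0, 2 theta] and [1 - 2 theta, 1]; at the remaining indices
   Q_n(x_n) grows geometrically, so sum (2 R_n)^s converges for every s > 0. A Hausdorff-Cantelli
   argument then shows that the limsup set is H^s-null for every s > 0. *)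

lemma hd_term_le_diameter_powr:
  assumes "s \<noteq> 0"
  shows "hd_term s U \<le> ennreal (diameter U powr s)"
  using assms by (simp add: hd_term_def)

lemma hausdorff_pre_le_sums:
  assumes cover: "E \<subseteq> (\<Union>i. U i)" and small: "\<And>i. bounded (U i) \<and> diameter (U i) \<le> \<delta>"
    and term_le: "\<And>i. hd_term s (U i) \<le> ennreal (h i)"
    and h_nonneg: "\<And>i. 0 \<le> h i" and h_sums: "h sums S"
  shows "hausdorff_pre s \<delta> E \<le> ennreal S"
proof -
  have "hausdorff_pre s \<delta> E \<le> (\<Sum>i. hd_term s (U i))"
    unfolding hausdorff_pre_def using cover small by (intro INF_lower) auto
  also have "\<dots> \<le> (\<Sum>i. ennreal (h i))"
    by (intro suminf_le term_le) auto
  also have "\<dots> = ennreal S"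
    by (rule suminf_ennreal_eq[OF h_nonneg h_sums])
  finally show ?thesis .
qed

lemma hausdorff_pre_le_two_plus_tail:
  fixes E V\<^sub>0 V\<^sub>1 :: "'a::metric_space set" and C :: "nat \<Rightarrow> 'a set"
  assumes s: "0 < s"
    and cover: "E \<subseteq> V\<^sub>0 \<union> V\<^sub>1 \<union> (\<Union>n\<in>{N..}. C n)"
    and V_small: "bounded V\<^sub>0" "diameter V\<^sub>0 \<le> \<delta>" "bounded V\<^sub>1" "diameter V\<^sub>1 \<le> \<delta>"
    and C_small: "\<And>n. N \<le> n \<Longrightarrow> bounded (C n) \<and> diameter (C n) \<le> \<delta>"
    and C_summable: "summable (\<lambda>n. diameter (C n) powr s)"
  shows "hausdorff_pre s \<delta> E
           \<le> ennreal (diameter V\<^sub>0 powr s + diameter V\<^sub>1 powr s + (\<Sum>i. diameter (C (i + N)) powr s))"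
proof -
  define c where "c = (\<lambda>n. diameter (C n) powr s)"
  define t where "t = (\<lambda>k. if N \<le> k then c k else 0)"
  define U where "U = case_nat V\<^sub>0 (case_nat V\<^sub>1 (\<lambda>k. if N \<le> k then C k else {}))"
  define h where "h = case_nat (diameter V\<^sub>0 powr s) (case_nat (diameter V\<^sub>1 powr s) t)"
  have t_sums: "t sums (\<Sum>i. c (i + N))"
  proof -
    have "summable (\<lambda>i. c (i + N))"
      using C_summable unfolding c_def by (subst summable_iff_shift)
    then have "(\<lambda>i. t (i + N)) sums (\<Sum>i. c (i + N))"
      unfolding t_def by (simp add: summable_sums)
    moreover have "sum t {..<N} = 0" by (simp add: t_def)
    ultimately show ?thesis using sums_iff_shift[of t N] by simp
  qed
  have h_sums: "h sums (diameter V\<^sub>0 powr s + diameter V\<^sub>1 powr s + (\<Sum>i. c (i + N)))"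
  proof -
    have "(\<lambda>n. h (Suc (Suc n))) sums (\<Sum>i. c (i + N))"
      using t_sums by (simp add: h_def)
    then have "(\<lambda>n. h (Suc n)) sums ((\<Sum>i. c (i + N)) + h (Suc 0))"
      by (rule sums_Suc)
    then have "h sums ((\<Sum>i. c (i + N)) + h (Suc 0) + h 0)"
      by (rule sums_Suc)
    then show ?thesis by (simp add: h_def algebra_simps)
  qed
  have "E \<subseteq> (\<Union>i. U i)"
  proof
    fix x assume "x \<in> E"
    then consider "x \<in> U 0" | "x \<in> U (Suc 0)" | n where "x \<in> U (Suc (Suc n))"
      using cover unfolding U_def by fastforce
    then show "x \<in> (\<Union>i. U i)" by cases blast+
  qed
  moreover have "bounded (U i) \<and> diameter (U i) \<le> \<delta>" for i
  proof -
    have "0 \<le> \<delta>" using V_small diameter_ge_0 order_trans by blast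
    then show ?thesis
      using V_small C_small unfolding U_def by (cases i; cases "i - 1") auto
  qed
  moreover have "hd_term s (U i) \<le> ennreal (h i)" for i
    using hd_term_le_diameter_powr[of s] s unfolding U_def h_def t_def c_def
    by (cases i; cases "i - 1") (auto simp: hd_term_def)
  moreover have "0 \<le> h i" for i
    unfolding h_def t_def c_def by (cases i; cases "i - 1") auto
  ultimately show ?thesis
    unfolding c_def by (rule hausdorff_pre_le_sums[OF _ _ _ _ h_sums[unfolded c_def]])
qed

(* Hausdorff-Cantelli with two exceptional sets: if E lies in V0, V1 and the limsup of sets
   C n with summable (diam C n)^s, then the tails of that series cover the limsup part at
   arbitrarily small cost, so only V0 and V1 remain in the bound. *)
lemma hausdorff_pre_limsup_le:
  fixes E V\<^sub>0 V\<^sub>1 :: "'a::metric_space set" and C :: "nat \<Rightarrow> 'a set"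
  assumes s: "0 < s"
    and cover: "E \<subseteq> V\<^sub>0 \<union> V\<^sub>1 \<union> (\<Inter>N. \<Union>n\<in>{N..}. C n)"
    and V_small: "bounded V\<^sub>0" "diameter V\<^sub>0 \<le> \<delta>" "bounded V\<^sub>1" "diameter V\<^sub>1 \<le> \<delta>"
    and C_bounded: "\<And>n. bounded (C n)"
    and C_small: "eventually (\<lambda>n. diameter (C n) \<le> \<delta>) sequentially"
    and C_summable: "summable (\<lambda>n. diameter (C n) powr s)"
  shows "hausdorff_pre s \<delta> E \<le> ennreal (diameter V\<^sub>0 powr s + diameter V\<^sub>1 powr s)"
proof (rule ennreal_le_epsilon)
  fix e :: real assume e: "0 < e"
  define d where "d = diameter V\<^sub>0 powr s + diameter V\<^sub>1 powr s"
  obtain N\<^sub>0 where N\<^sub>0: "\<And>n. N\<^sub>0 \<le> n \<Longrightarrow> diameter (C n) \<le> \<delta>"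
    using C_small by (auto simp: eventually_sequentially)
  obtain N\<^sub>1 where N\<^sub>1: "\<And>n. N\<^sub>1 \<le> n \<Longrightarrow> norm (\<Sum>i. diameter (C (i + n)) powr s) < e"
    using suminf_exist_split[OF e C_summable] by blast
  define N where "N = max N\<^sub>0 N\<^sub>1"
  have "E \<subseteq> V\<^sub>0 \<union> V\<^sub>1 \<union> (\<Union>n\<in>{N..}. C n)" using cover by blast
  then have "hausdorff_pre s \<delta> E \<le> ennreal (d + (\<Sum>i. diameter (C (i + N)) powr s))"
    unfolding d_def using C_bounded N\<^sub>0
    by (intro hausdorff_pre_le_two_plus_tail[OF s _ V_small _ C_summable]) (auto simp: N_def)
  also have "\<dots> \<le> ennreal d + ennreal e"
  proof -
    have "(\<Sum>i. diameter (C (i + N)) powr s) \<le> e"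
      using N\<^sub>1[of N] by (simp add: N_def)
    moreover have "0 \<le> d" by (simp add: d_def)
    ultimately show ?thesis using e by (simp add: ennreal_plus[symmetric] ennreal_leI del: ennreal_plus)
  qed
  finally show "hausdorff_pre s \<delta> E \<le> ennreal d + ennreal e" .
qed

lemma hausdorff_measure_eq_0I:
  assumes "\<And>\<delta> e. 0 < \<delta> \<Longrightarrow> 0 < e \<Longrightarrow> hausdorff_pre s \<delta> E \<le> ennreal e"
  shows "hausdorff_measure s E = 0"
proof -
  have "hausdorff_pre s \<delta> E = 0" if "0 < \<delta>" for \<delta>
    using assms[OF that] by (metis add_0 ennreal_le_epsilon le_zero_eq)
  then show ?thesis unfolding hausdorff_measure_def by simp
qed

lemma hausdorff_dim_eq_0I:
  assumes "\<And>s. 0 < s \<Longrightarrow> hausdorff_measure s E = 0"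
  shows "hausdorff_dim E = 0"
proof -
  define S where "S = {s. 0 \<le> s \<and> hausdorff_measure s E = 0}"
  have pos_in_S: "s \<in> S" if "0 < s" for s
    using assms[OF that] that by (simp add: S_def)
  have bdd: "bdd_below S" unfolding S_def by (auto intro: bdd_belowI[of _ 0])
  have "0 \<le> Inf S"
    using pos_in_S[of 1] by (intro cInf_greatest) (auto simp: S_def intro: exI[of _ 1])
  moreover have "\<not> 0 < Inf S"
  proof
    assume "0 < Inf S"
    then have "Inf S \<le> Inf S / 2" using pos_in_S[of "Inf S / 2"] bdd by (intro cInf_lower) auto
    with \<open>0 < Inf S\<close> show False by simp
  qed
  ultimately show ?thesis unfolding hausdorff_dim_def S_def[symmetric] by simp
qed

(* The "denominator" of the Farey word: f_{1,w|n} is a Moebius map whose derivative is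
   1/Q^2, where Q(x) = farey_denom beta n x is affine in x (see farey_denom_affine). *)
fun farey_denom :: "real \<Rightarrow> nat \<Rightarrow> real \<Rightarrow> real" where
  "farey_denom \<beta> 0 x = 1"
| "farey_denom \<beta> (Suc n) x = (1 + x) * farey_denom \<beta> n (farey_branch (farey_digit \<beta> (Suc n)) x)"

lemma farey_branch_in_unit: "x \<in> {0..1} \<Longrightarrow> farey_branch j x \<in> {0..1}"
  by (auto simp: farey_branch_def field_simps)

(* Q(x) = d + c x with c, d >= 0, d >= 1, and Q(1) = c + d >= n + 1: each branch step
   replaces (c, d) by (c + d, d) or (d, c + d). *)
lemma farey_denom_affine:
  "\<exists>c d. 0 \<le> c \<and> 1 \<le> d \<and> real n + 1 \<le> c + d \<and> (\<forall>x\<ge>0. farey_denom \<beta> n x = d + c * x)"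
proof (induction n)
  case 0
  show ?case by (intro exI[of _ 0] exI[of _ 1]) auto
next
  case (Suc n)
  then obtain c d where cd: "0 \<le> c" "1 \<le> d" "real n + 1 \<le> c + d"
    and eq: "\<And>x. 0 \<le> x \<Longrightarrow> farey_denom \<beta> n x = d + c * x"
    by blast
  have step: "farey_denom \<beta> (Suc n) x = (1 + x) * (d + c * farey_branch (farey_digit \<beta> (Suc n)) x)"
    if "0 \<le> x" for x
  proof -
    have "0 \<le> farey_branch (farey_digit \<beta> (Suc n)) x" using that by (simp add: farey_branch_def)
    then show ?thesis by (simp add: eq)
  qed
  show ?case
  proof (cases "farey_digit \<beta> (Suc n) = 0")
    case True
    have "farey_denom \<beta> (Suc n) x = d + (c + d) * x" if "0 \<le> x" for x
      unfolding step[OF that] using True that by (simp add: farey_branch_def field_simps)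
    with cd show ?thesis by (intro exI[of _ "c + d"] exI[of _ d]) auto
  next
    case False
    have "farey_denom \<beta> (Suc n) x = (c + d) + d * x" if "0 \<le> x" for x
      unfolding step[OF that] using False that by (simp add: farey_branch_def field_simps)
    with cd show ?thesis by (intro exI[of _ d] exI[of _ "c + d"]) auto
  qed
qed

lemma farey_denom_ge_1: "0 \<le> x \<Longrightarrow> 1 \<le> farey_denom \<beta> n x"
  using farey_denom_affine[of n \<beta>] by (force intro: add_increasing2)

lemma farey_denom_le_at_1: "x \<in> {0..1} \<Longrightarrow> farey_denom \<beta> n x \<le> farey_denom \<beta> n 1"
  using farey_denom_affine[of n \<beta>] by (force intro: mult_left_le)

lemma farey_denom_at_1_mult_le: "x \<in> {0..1} \<Longrightarrow> farey_denom \<beta> n 1 * x \<le> farey_denom \<beta> n x"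
proof -
  assume x: "x \<in> {0..1}"
  obtain c d where cd: "0 \<le> c" "1 \<le> d" "\<forall>x\<ge>0. farey_denom \<beta> n x = d + c * x"
    using farey_denom_affine by blast
  have "d * x \<le> d" using x cd by (simp add: mult_left_le)
  then show ?thesis using cd x by (simp add: algebra_simps)
qed

lemma farey_denom_at_1_ge: "real n + 1 \<le> farey_denom \<beta> n 1"
  using farey_denom_affine[of n \<beta>] by force

lemma farey_word_dist:
  "x \<in> {0..1} \<Longrightarrow> y \<in> {0..1} \<Longrightarrow>
   \<bar>farey_word \<beta> n x - farey_word \<beta> n y\<bar> = \<bar>x - y\<bar> / (farey_denom \<beta> n x * farey_denom \<beta> n y)"
proof (induction n arbitrary: x y)
  case 0
  then show ?case by simp
next
  case (Suc n)
  let ?b = "farey_branch (farey_digit \<beta> (Suc n))"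
  have b_unit: "?b x \<in> {0..1}" "?b y \<in> {0..1}" using Suc.prems farey_branch_in_unit by auto
  have branch_dist: "\<bar>?b x - ?b y\<bar> = \<bar>x - y\<bar> / ((1 + x) * (1 + y))"
    using Suc.prems by (auto simp: farey_branch_def field_simps abs_div abs_minus_commute)
  have "0 < farey_denom \<beta> n (?b x)" "0 < farey_denom \<beta> n (?b y)"
    using farey_denom_ge_1[of "?b x" \<beta> n] farey_denom_ge_1[of "?b y" \<beta> n] b_unit by auto
  then show ?case using Suc.IH[OF b_unit] branch_dist Suc.prems by (simp add: field_simps)
qed

lemma farey_branch_deriv:
  assumes "-1 < x"
  shows "(farey_branch j has_real_derivative (if j = 0 then 1 else -1) / (1 + x)^2) (at x)"
proof (cases "j = 0")
  case True
  have "((\<lambda>x. x / (1 + x)) has_real_derivative 1 / (1 + x)^2) (at x)"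
    using assms by (auto intro!: derivative_eq_intros simp: field_simps power2_eq_square)
  then show ?thesis using True by (simp add: farey_branch_def[abs_def])
next
  case False
  have "((\<lambda>x. 1 / (1 + x)) has_real_derivative -1 / (1 + x)^2) (at x)"
    using assms by (auto intro!: derivative_eq_intros simp: field_simps power2_eq_square)
  then show ?thesis using False by (simp add: farey_branch_def[abs_def])
qed

lemma farey_word_deriv:
  "x \<in> {0..1} \<Longrightarrow>
   \<exists>D. (farey_word \<beta> n has_real_derivative D) (at x) \<and> \<bar>D\<bar> = 1 / (farey_denom \<beta> n x)^2"
proof (induction n arbitrary: x)
  case 0
  then show ?case by (auto intro!: exI[of _ 1] simp: id_def)
next
  case (Suc n)
  let ?j = "farey_digit \<beta> (Suc n)"
  let ?b = "farey_branch ?j"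
  have b_unit: "?b x \<in> {0..1}" using Suc.prems farey_branch_in_unit by auto
  obtain D where D: "(farey_word \<beta> n has_real_derivative D) (at (?b x))"
    "\<bar>D\<bar> = 1 / (farey_denom \<beta> n (?b x))^2"
    using Suc.IH[OF b_unit] by blast
  have x: "-1 < x" using Suc.prems by auto
  have "(farey_word \<beta> n \<circ> ?b has_real_derivative D * ((if ?j = 0 then 1 else -1) / (1 + x)^2)) (at x)"
    by (rule DERIV_chain[OF D(1) farey_branch_deriv[OF x]])
  moreover have "\<bar>D * ((if ?j = 0 then 1 else -1) / (1 + x)^2)\<bar> = 1 / (farey_denom \<beta> (Suc n) x)^2"
    using D(2) x by (simp add: abs_mult power_mult_distrib)
  ultimately show ?case unfolding farey_word.simps by blast
qed

lemma farey_T_in_unit: "y \<in> {0..1} \<Longrightarrow> farey_T y \<in> {0..1}"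
  by (auto simp: farey_T_def field_simps)

lemma farey_branch_farey_T:
  "y \<in> {0..1} \<Longrightarrow> farey_branch (if y \<le> 1/2 then 0 else 1) (farey_T y) = y"
  by (auto simp: farey_T_def farey_branch_def field_simps)

lemma farey_T_ge:
  assumes "0 \<le> \<theta>" "\<theta> \<le> y" "y \<le> 1 - \<theta>"
  shows "\<theta> \<le> farey_T y"
proof (cases "y \<le> 1/2")
  case True
  then have "y \<le> y / (1 - y)" using assms by (auto simp: field_simps mult_left_le)
  then show ?thesis using True assms by (simp add: farey_T_def)
next
  case False
  have "0 \<le> (y - 1)^2" by simp
  then have "1 - y \<le> (1 - y) / y" using assms False by (auto simp: field_simps power2_eq_square)
  then show ?thesis using False assms by (simp add: farey_T_def)
qed

definition farey_orbit :: "real \<Rightarrow> nat \<Rightarrow> real" where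
  "farey_orbit \<beta> n = (farey_T ^^ n) \<beta>"

lemma farey_orbit_Suc: "farey_orbit \<beta> (Suc n) = farey_T (farey_orbit \<beta> n)"
  by (simp add: farey_orbit_def)

lemma farey_orbit_in_unit: "\<beta> \<in> {0..1} \<Longrightarrow> farey_orbit \<beta> n \<in> {0..1}"
proof (induction n)
  case (Suc n)
  then show ?case using farey_T_in_unit by (simp add: farey_orbit_Suc)
qed (simp add: farey_orbit_def)

lemma farey_branch_digit_orbit:
  assumes "\<beta> \<in> {0..1}"
  shows "farey_branch (farey_digit \<beta> (Suc n)) (farey_orbit \<beta> (Suc n)) = farey_orbit \<beta> n"
  using farey_branch_farey_T[OF farey_orbit_in_unit[OF assms]]
  by (simp add: farey_digit_def farey_orbit_def)

lemma farey_word_orbit: "\<beta> \<in> {0..1} \<Longrightarrow> farey_word \<beta> n (farey_orbit \<beta> n) = \<beta>"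
  by (induction n) (simp_all add: farey_orbit_def[of _ 0] farey_branch_digit_orbit)

(* Along the orbit the denominators multiply by 1 + x_{n+1}; so they never decrease and grow
   by a factor 1 + theta whenever x_n lies in [theta, 1 - theta]. *)
lemma farey_denom_orbit_Suc:
  "\<beta> \<in> {0..1} \<Longrightarrow>
   farey_denom \<beta> (Suc n) (farey_orbit \<beta> (Suc n)) = (1 + farey_orbit \<beta> (Suc n)) * farey_denom \<beta> n (farey_orbit \<beta> n)"
  by (simp add: farey_branch_digit_orbit)

lemma farey_tail_eq:
  assumes \<beta>: "\<beta> \<in> {0..1}" and x: "x \<in> {0..1}" and x_ne: "x \<noteq> farey_orbit \<beta> n"
  shows "v_tail \<beta> \<alpha> n x = ereal (farey_denom \<beta> n x powr (\<alpha> - 2)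
           * farey_denom \<beta> n (farey_orbit \<beta> n) powr \<alpha> * \<bar>x - farey_orbit \<beta> n\<bar> powr (- \<alpha>))"
proof -
  define a where "a = farey_denom \<beta> n x"
  define b where "b = farey_denom \<beta> n (farey_orbit \<beta> n)"
  define u where "u = \<bar>x - farey_orbit \<beta> n\<bar>"
  have a: "1 \<le> a" unfolding a_def using x by (intro farey_denom_ge_1) simp
  have b: "1 \<le> b" unfolding b_def using farey_orbit_in_unit[OF \<beta>] by (intro farey_denom_ge_1) simp
  have u: "0 < u" unfolding u_def using x_ne by simp
  obtain D where D: "(farey_word \<beta> n has_real_derivative D) (at x)" "\<bar>D\<bar> = 1 / a^2"
    using farey_word_deriv[OF x] unfolding a_def by blast
  have dist: "\<bar>farey_word \<beta> n x - \<beta>\<bar> = u / (a * b)"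
    using farey_word_dist[OF x farey_orbit_in_unit[OF \<beta>, of n], of \<beta> n] farey_word_orbit[OF \<beta>, of n]
    unfolding u_def a_def b_def by simp
  then have "farey_word \<beta> n x \<noteq> \<beta>" using u a b by auto
  then have "v_tail \<beta> \<alpha> n x = ereal (1 / a^2 * (u / (a * b)) powr (- \<alpha>))"
    unfolding v_tail_def v_pot_def using DERIV_imp_deriv[OF D(1)] D(2) dist by simp
  also have "1 / a^2 * (u / (a * b)) powr (- \<alpha>) = a powr (\<alpha> - 2) * b powr \<alpha> * u powr (- \<alpha>)"
  proof -
    have "(u / (a * b)) powr (- \<alpha>) = u powr (- \<alpha>) * (a powr \<alpha> * b powr \<alpha>)"
      using u a b by (simp add: powr_divide powr_mult powr_minus field_simps)
    moreover have "a powr (\<alpha> - 2) = a powr \<alpha> / a^2"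
      using a by (simp add: powr_diff powr_numeral)
    ultimately show ?thesis by simp
  qed
  finally show ?thesis unfolding a_def b_def u_def .
qed

lemma farey_tail_factor_le:
  assumes \<beta>: "\<beta> \<in> {0..1}" and \<alpha>: "0 \<le> \<alpha>" "\<alpha> \<le> 2"
    and \<theta>: "0 < \<theta>" "\<theta> \<le> x" "x \<le> 1"
  shows "farey_denom \<beta> n x powr (\<alpha> - 2) * farey_denom \<beta> n (farey_orbit \<beta> n) powr \<alpha>
         \<le> \<theta> powr (\<alpha> - 2) * farey_denom \<beta> n 1 powr (2 * \<alpha> - 2)"
proof -
  define D where "D = farey_denom \<beta> n 1"
  have D: "0 < D" unfolding D_def using farey_denom_ge_1[of 1 \<beta> n] by simp
  have x: "x \<in> {0..1}" using \<theta> by simp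
  have "D * \<theta> \<le> farey_denom \<beta> n x"
    using farey_denom_at_1_mult_le[OF x, of \<beta> n] D \<theta> unfolding D_def
    by (smt (verit) mult_left_mono)
  then have "farey_denom \<beta> n x powr (\<alpha> - 2) \<le> (D * \<theta>) powr (\<alpha> - 2)"
    using D \<theta> \<alpha> by (intro powr_mono2') auto
  moreover have "farey_denom \<beta> n (farey_orbit \<beta> n) powr \<alpha> \<le> D powr \<alpha>"
    using farey_denom_le_at_1[OF farey_orbit_in_unit[OF \<beta>]] \<alpha>
      farey_denom_ge_1[of "farey_orbit \<beta> n" \<beta> n] farey_orbit_in_unit[OF \<beta>, of n]
    unfolding D_def by (intro powr_mono2) auto
  ultimately have "farey_denom \<beta> n x powr (\<alpha> - 2) * farey_denom \<beta> n (farey_orbit \<beta> n) powr \<alpha>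
      \<le> (D * \<theta>) powr (\<alpha> - 2) * D powr \<alpha>"
    by (intro mult_mono) auto
  also have "\<dots> = \<theta> powr (\<alpha> - 2) * D powr (2 * \<alpha> - 2)"
    using D \<theta> by (simp add: powr_mult powr_add[symmetric] algebra_simps)
  finally show ?thesis unfolding D_def .
qed

(* Logarithmic growth is beaten by every power of the denominator, since Q(1) >= n + 1:
   ln n <= Q(1)^e / e. *)
lemma ln_le_farey_denom_powr:
  assumes e: "0 < e"
  shows "ln (real n) \<le> farey_denom \<beta> n 1 powr e / e"
proof -
  define D where "D = farey_denom \<beta> n 1"
  have D: "real n + 1 \<le> D" unfolding D_def by (rule farey_denom_at_1_ge)
  have "ln (D powr e) \<le> D powr e - 1" using D by (intro ln_le_minus_one) simp
  then have "ln D \<le> D powr e / e" using D e by (simp add: ln_powr field_simps)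
  moreover have "ln (real n) \<le> ln D"
    using D by (cases "n = 0") auto
  ultimately show ?thesis unfolding D_def by linarith
qed

(* If a positive nondecreasing sequence grows by a factor 1 + theta at every step in G, then
   the terms P_k^(-sigma) over k in G form a convergent (geometrically dominated) series;
   the proof tracks the potential  sum_{k<m} g k + K P_m^(-sigma). *)
lemma summable_powr_growth_steps:
  fixes P :: "nat \<Rightarrow> real"
  assumes P_pos: "\<And>k. 0 < P k" and P_mono: "\<And>k. P k \<le> P (Suc k)"
    and P_growth: "\<And>k. G k \<Longrightarrow> (1 + \<theta>) * P k \<le> P (Suc k)"
    and \<theta>: "0 < \<theta>" and \<sigma>: "0 < \<sigma>"
  shows "summable (\<lambda>k. if G k then P k powr (- \<sigma>) else 0)"
proof -
  define g where "g = (\<lambda>k. if G k then P k powr (- \<sigma>) else 0)"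
  define r where "r = (1 + \<theta>) powr (- \<sigma>)"
  have r: "0 < r" "r < 1" unfolding r_def using \<theta> \<sigma> by (auto intro: powr_less_one)
  define K where "K = 1 / (1 - r)"
  have K: "0 < K" "1 + K * r = K" unfolding K_def using r by (auto simp: field_simps)
  have potential: "(\<Sum>k<m. g k) + K * P m powr (- \<sigma>) \<le> K * P 0 powr (- \<sigma>)" for m
  proof (induction m)
    case (Suc m)
    have "g m + K * P (Suc m) powr (- \<sigma>) \<le> K * P m powr (- \<sigma>)"
    proof (cases "G m")
      case True
      have "P (Suc m) powr (- \<sigma>) \<le> ((1 + \<theta>) * P m) powr (- \<sigma>)"
        using P_growth[OF True] P_pos[of m] \<theta> \<sigma> by (intro powr_mono2') auto
      also have "\<dots> = r * P m powr (- \<sigma>)"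
        unfolding r_def using \<theta> P_pos[of m] by (simp add: powr_mult)
      finally have "K * P (Suc m) powr (- \<sigma>) \<le> K * (r * P m powr (- \<sigma>))"
        using K(1) by simp
      then have "g m + K * P (Suc m) powr (- \<sigma>) \<le> (1 + K * r) * P m powr (- \<sigma>)"
        using True unfolding g_def by (simp add: algebra_simps)
      then show ?thesis using K(2) by simp
    next
      case False
      have "P (Suc m) powr (- \<sigma>) \<le> P m powr (- \<sigma>)"
        using P_mono[of m] P_pos[of m] \<sigma> by (intro powr_mono2') auto
      then show ?thesis using False K unfolding g_def by simp
    qed
    with Suc.IH show ?case by simp
  qed simp
  have "summable g"
  proof (rule summableI_nonneg_bounded)
    show "0 \<le> g n" for n unfolding g_def by simp
    show "(\<Sum>i<n. g i) \<le> K * P 0 powr (- \<sigma>)" for n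
      using potential[of n] K by (smt (verit) powr_ge_zero mult_nonneg_nonneg)
  qed
  then show ?thesis unfolding g_def .
qed

(* Outside [0, theta] the set A_n lies in the window of radius tail_radius around x_n; only
   windows around orbit points in (theta, 1 - theta) are kept for the cover. *)
definition tail_radius :: "real \<Rightarrow> real \<Rightarrow> real \<Rightarrow> real \<Rightarrow> nat \<Rightarrow> real" where
  "tail_radius \<beta> \<alpha> \<eta> \<theta> n =
     (\<theta> powr (\<alpha> - 2) / ((1 - \<alpha>) * \<eta>) * farey_denom \<beta> n 1 powr (\<alpha> - 1)) powr (1 / \<alpha>)"

definition tail_window :: "real \<Rightarrow> real \<Rightarrow> real \<Rightarrow> real \<Rightarrow> nat \<Rightarrow> real set" where
  "tail_window \<beta> \<alpha> \<eta> \<theta> n =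
     (if \<theta> < farey_orbit \<beta> n \<and> farey_orbit \<beta> n < 1 - \<theta>
      then {farey_orbit \<beta> n - tail_radius \<beta> \<alpha> \<eta> \<theta> n .. farey_orbit \<beta> n + tail_radius \<beta> \<alpha> \<eta> \<theta> n}
      else {})"

context
  fixes \<alpha> \<beta> \<eta> :: real
  assumes \<alpha>: "0 < \<alpha>" "\<alpha> < 1" and \<beta>: "\<beta> \<in> {0..1}" and \<eta>: "0 < \<eta>"
begin

(* Key estimate: on A_n, ln n * v_{n,1}(x) > eta together with ln n <= Q(1)^(1-alpha)/(1-alpha)
   forces |x - x_n|^alpha < M Q(1)^(alpha-1), where M = theta^(alpha-2) / ((1-alpha) eta). *)
lemma A_set_near_orbit:
  assumes \<theta>: "0 < \<theta>" and x_A: "x \<in> A_set \<beta> \<alpha> \<eta> n" and x_ge: "\<theta> \<le> x"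
  shows "\<bar>x - farey_orbit \<beta> n\<bar> \<le> tail_radius \<beta> \<alpha> \<eta> \<theta> n"
proof (cases "x = farey_orbit \<beta> n")
  case False
  define D where "D = farey_denom \<beta> n 1"
  define u where "u = \<bar>x - farey_orbit \<beta> n\<bar>"
  define M where "M = \<theta> powr (\<alpha> - 2) / ((1 - \<alpha>) * \<eta>)"
  define w where "w = farey_denom \<beta> n x powr (\<alpha> - 2)
      * farey_denom \<beta> n (farey_orbit \<beta> n) powr \<alpha> * u powr (- \<alpha>)"
  have x: "x \<in> {0..1}" using x_A by (simp add: A_set_def)
  have u: "0 < u" unfolding u_def using False by simp
  have ln_le: "ln (real n) \<le> D powr (1 - \<alpha>) / (1 - \<alpha>)"
    unfolding D_def using \<alpha> by (intro ln_le_farey_denom_powr) simp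
  have tail_large: "\<eta> < ln (real n) * w"
    using x_A farey_tail_eq[OF \<beta> x False, of \<alpha>] by (simp add: A_set_def w_def u_def)
  have w_nonneg: "0 \<le> w" unfolding w_def by simp
  have w_le: "w \<le> \<theta> powr (\<alpha> - 2) * D powr (2 * \<alpha> - 2) * u powr (- \<alpha>)"
    unfolding w_def D_def using farey_tail_factor_le[OF \<beta> _ _ \<theta> x_ge, of \<alpha> n] x \<alpha>
    by (intro mult_right_mono) auto
  have "\<eta> < D powr (1 - \<alpha>) / (1 - \<alpha>) * (\<theta> powr (\<alpha> - 2) * D powr (2 * \<alpha> - 2) * u powr (- \<alpha>))"
  proof -
    have "0 \<le> D powr (1 - \<alpha>) / (1 - \<alpha>)" using \<alpha> by simp
    then have "ln (real n) * w \<le> D powr (1 - \<alpha>) / (1 - \<alpha>)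
        * (\<theta> powr (\<alpha> - 2) * D powr (2 * \<alpha> - 2) * u powr (- \<alpha>))"
      using mult_mono[OF ln_le w_le] w_nonneg by simp
    with tail_large show ?thesis by linarith
  qed
  also have "\<dots> = \<eta> * (M * D powr (\<alpha> - 1)) / u powr \<alpha>"
  proof -
    have "D powr (1 - \<alpha>) * D powr (2 * \<alpha> - 2) = D powr (\<alpha> - 1)"
      by (simp add: powr_add[symmetric])
    then show ?thesis unfolding M_def using \<alpha> \<eta> u by (simp add: powr_minus field_simps)
  qed
  finally have "u powr \<alpha> < M * D powr (\<alpha> - 1)"
    using u \<eta> by (simp add: field_simps)
  then have "(u powr \<alpha>) powr (1 / \<alpha>) \<le> (M * D powr (\<alpha> - 1)) powr (1 / \<alpha>)"
    using \<alpha> by (intro powr_mono2) auto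
  then show ?thesis
    using u \<alpha> by (simp add: powr_powr tail_radius_def M_def D_def u_def)
qed (simp add: tail_radius_def)

(* Since Q(1) >= n + 1 and alpha < 1, the window radii shrink to 0. *)
lemma tail_radius_tendsto_0:
  assumes \<theta>: "0 < \<theta>"
  shows "tail_radius \<beta> \<alpha> \<eta> \<theta> \<longlonglongrightarrow> 0"
proof (rule tendsto_sandwich)
  define M where "M = \<theta> powr (\<alpha> - 2) / ((1 - \<alpha>) * \<eta>)"
  have M: "0 < M" unfolding M_def using \<theta> \<alpha> \<eta> by simp
  show "eventually (\<lambda>n. 0 \<le> tail_radius \<beta> \<alpha> \<eta> \<theta> n) sequentially"
    by (simp add: tail_radius_def)
  show "eventually (\<lambda>n. tail_radius \<beta> \<alpha> \<eta> \<theta> n \<le> (M * (real n + 1) powr (\<alpha> - 1)) powr (1 / \<alpha>))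
      sequentially"
  proof (rule always_eventually, rule allI)
    fix n
    have "farey_denom \<beta> n 1 powr (\<alpha> - 1) \<le> (real n + 1) powr (\<alpha> - 1)"
      using farey_denom_at_1_ge[of n \<beta>] \<alpha> by (intro powr_mono2') auto
    then show "tail_radius \<beta> \<alpha> \<eta> \<theta> n \<le> (M * (real n + 1) powr (\<alpha> - 1)) powr (1 / \<alpha>)"
      unfolding tail_radius_def M_def[symmetric] using M \<alpha> by (intro powr_mono2) auto
  qed
  have "filterlim (\<lambda>n. real n + 1) at_top sequentially"
    using filterlim_tendsto_add_at_top[OF tendsto_const filterlim_real_sequentially, of 1]
    by (simp add: add.commute)
  then have "(\<lambda>n. M * (real n + 1) powr (\<alpha> - 1)) \<longlonglongrightarrow> M * 0"
    using \<alpha> by (intro tendsto_mult tendsto_const tendsto_neg_powr) auto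
  then show "(\<lambda>n. (M * (real n + 1) powr (\<alpha> - 1)) powr (1 / \<alpha>)) \<longlonglongrightarrow> 0"
    using \<alpha> M by (intro tendsto_zero_powrI[OF _ tendsto_const]) (auto intro!: always_eventually)
qed (rule tendsto_const)

lemma limsup_A_subset:
  assumes \<theta>: "0 < \<theta>"
  shows "(\<Inter>N. \<Union>n\<in>{N..}. A_set \<beta> \<alpha> \<eta> n)
         \<subseteq> {0..2*\<theta>} \<union> {1 - 2*\<theta>..1} \<union> (\<Inter>N. \<Union>n\<in>{N..}. tail_window \<beta> \<alpha> \<eta> \<theta> n)"
proof
  fix x assume x: "x \<in> (\<Inter>N. \<Union>n\<in>{N..}. A_set \<beta> \<alpha> \<eta> n)"
  obtain N\<^sub>\<theta> where N\<^sub>\<theta>: "\<And>n. N\<^sub>\<theta> \<le> n \<Longrightarrow> tail_radius \<beta> \<alpha> \<eta> \<theta> n < \<theta>"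
    using order_tendstoD(2)[OF tail_radius_tendsto_0[OF \<theta>] \<theta>] by (auto simp: eventually_sequentially)
  show "x \<in> {0..2*\<theta>} \<union> {1 - 2*\<theta>..1} \<union> (\<Inter>N. \<Union>n\<in>{N..}. tail_window \<beta> \<alpha> \<eta> \<theta> n)"
  proof (rule ccontr)
    assume not_covered: "x \<notin> {0..2*\<theta>} \<union> {1 - 2*\<theta>..1} \<union> (\<Inter>N. \<Union>n\<in>{N..}. tail_window \<beta> \<alpha> \<eta> \<theta> n)"
    then obtain N where N: "\<And>n. N \<le> n \<Longrightarrow> x \<notin> tail_window \<beta> \<alpha> \<eta> \<theta> n" by blast
    obtain n where n: "max N N\<^sub>\<theta> \<le> n" "x \<in> A_set \<beta> \<alpha> \<eta> n" using x by blast
    have x_unit: "0 \<le> x" "x \<le> 1" using n(2) by (auto simp: A_set_def)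
    then have "\<theta> \<le> x" using not_covered \<theta> by auto
    then have "\<bar>x - farey_orbit \<beta> n\<bar> \<le> tail_radius \<beta> \<alpha> \<eta> \<theta> n"
      by (rule A_set_near_orbit[OF \<theta> n(2)])
    moreover have "tail_radius \<beta> \<alpha> \<eta> \<theta> n < \<theta>" using N\<^sub>\<theta> n(1) by simp
    moreover have "x \<notin> tail_window \<beta> \<alpha> \<eta> \<theta> n" using N n(1) by simp
    ultimately show False
      using not_covered x_unit by (auto simp: tail_window_def abs_le_iff split: if_splits)
  qed
qed

(* Size of a window: (2 R_n)^s = C Q_n(1)^(-sigma) <= C Q_n(x_n)^(-sigma),
   with sigma = (1 - alpha) s / alpha and C independent of n. *)
lemma tail_window_diameter_powr_le:
  assumes \<theta>: "0 < \<theta>" and s: "0 < s"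
  shows "diameter (tail_window \<beta> \<alpha> \<eta> \<theta> n) powr s
         \<le> 2 powr s * (\<theta> powr (\<alpha> - 2) / ((1 - \<alpha>) * \<eta>)) powr (s / \<alpha>)
            * (if \<theta> < farey_orbit \<beta> n \<and> farey_orbit \<beta> n < 1 - \<theta>
               then farey_denom \<beta> n (farey_orbit \<beta> n) powr (- ((1 - \<alpha>) * s / \<alpha>)) else 0)"
proof -
  define \<sigma> where "\<sigma> = (1 - \<alpha>) * s / \<alpha>"
  define M where "M = \<theta> powr (\<alpha> - 2) / ((1 - \<alpha>) * \<eta>)"
  define C where "C = 2 powr s * M powr (s / \<alpha>)"
  have M: "0 < M" unfolding M_def using \<theta> \<alpha> \<eta> by simp
  have D: "0 < farey_denom \<beta> n 1" using farey_denom_ge_1[of 1 \<beta> n] by simp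
  have orbit: "farey_orbit \<beta> n \<in> {0..1}" by (rule farey_orbit_in_unit[OF \<beta>])
  have "(2 * tail_radius \<beta> \<alpha> \<eta> \<theta> n) powr s = C * farey_denom \<beta> n 1 powr (- \<sigma>)"
    unfolding tail_radius_def C_def \<sigma>_def M_def[symmetric] using M D \<alpha>
    by (simp add: powr_mult powr_powr algebra_simps) (metis minus_diff_eq minus_divide_left)
  also have "\<dots> \<le> C * farey_denom \<beta> n (farey_orbit \<beta> n) powr (- \<sigma>)"
    using farey_denom_le_at_1[OF orbit] farey_denom_ge_1[of "farey_orbit \<beta> n" \<beta> n] orbit \<alpha> s
    unfolding C_def \<sigma>_def by (intro mult_left_mono powr_mono2') auto
  finally show ?thesis
    using s unfolding C_def M_def \<sigma>_def by (simp add: tail_window_def tail_radius_def)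
qed

(* The windows only occur at growth steps of Q_n(x_n), so their sizes form a convergent series. *)
lemma tail_window_summable:
  assumes \<theta>: "0 < \<theta>" and s: "0 < s"
  shows "summable (\<lambda>n. diameter (tail_window \<beta> \<alpha> \<eta> \<theta> n) powr s)"
proof -
  define P where "P = (\<lambda>k. farey_denom \<beta> k (farey_orbit \<beta> k))"
  define G where "G = (\<lambda>k. \<theta> < farey_orbit \<beta> k \<and> farey_orbit \<beta> k < 1 - \<theta>)"
  have \<sigma>: "0 < (1 - \<alpha>) * s / \<alpha>" using \<alpha> s by simp
  have orbit: "farey_orbit \<beta> k \<in> {0..1}" for k by (rule farey_orbit_in_unit[OF \<beta>])
  have P_ge_1: "1 \<le> P k" for k unfolding P_def using orbit by (intro farey_denom_ge_1) auto
  have P_growth: "(1 + t) * P k \<le> P (Suc k)" if "0 \<le> t" "t \<le> farey_orbit \<beta> (Suc k)" for k t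
    using that P_ge_1[of k] unfolding P_def farey_denom_orbit_Suc[OF \<beta>]
    by (intro mult_right_mono) auto
  have "summable (\<lambda>k. if G k then P k powr (- ((1 - \<alpha>) * s / \<alpha>)) else 0)"
  proof (rule summable_powr_growth_steps[OF _ _ _ \<theta> \<sigma>])
    show "0 < P k" for k using P_ge_1[of k] by linarith
    show "P k \<le> P (Suc k)" for k using P_growth[of 0 k] orbit by simp
    show "(1 + \<theta>) * P k \<le> P (Suc k)" if "G k" for k
      using that P_growth[of \<theta> k] farey_T_ge[of \<theta> "farey_orbit \<beta> k"] \<theta>
      unfolding G_def farey_orbit_Suc by simp
  qed
  then have "summable (\<lambda>k. 2 powr s * (\<theta> powr (\<alpha> - 2) / ((1 - \<alpha>) * \<eta>)) powr (s / \<alpha>)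
      * (if G k then P k powr (- ((1 - \<alpha>) * s / \<alpha>)) else 0))"
    by (rule summable_mult)
  then show ?thesis
  proof (rule summable_comparison_test')
    fix n
    show "norm (diameter (tail_window \<beta> \<alpha> \<eta> \<theta> n) powr s) \<le> 2 powr s
        * (\<theta> powr (\<alpha> - 2) / ((1 - \<alpha>) * \<eta>)) powr (s / \<alpha>)
        * (if G n then P n powr (- ((1 - \<alpha>) * s / \<alpha>)) else 0)"
      unfolding P_def G_def real_norm_def abs_of_nonneg[OF powr_ge_zero]
      by (rule tail_window_diameter_powr_le[OF \<theta> s])
  qed
qed

(* Choosing theta small makes the two boundary intervals arbitrarily cheap. *)
lemma limsup_A_hausdorff_null:
  assumes s: "0 < s"
  shows "hausdorff_measure s (\<Inter>N. \<Union>n\<in>{N..}. A_set \<beta> \<alpha> \<eta> n) = 0"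
proof (rule hausdorff_measure_eq_0I)
  fix \<delta> e :: real assume \<delta>: "0 < \<delta>" and e: "0 < e"
  define \<theta> where "\<theta> = min (\<delta> / 2) ((e / 2) powr (1 / s) / 2)"
  have \<theta>: "0 < \<theta>" "2 * \<theta> \<le> \<delta>" unfolding \<theta>_def using \<delta> e by auto
  have "(2 * \<theta>) powr s \<le> ((e / 2) powr (1 / s)) powr s"
    unfolding \<theta>_def using \<theta> s by (intro powr_mono2) auto
  then have \<theta>_small: "(2 * \<theta>) powr s \<le> e / 2" using s e by (simp add: powr_powr)
  have windows_small: "eventually (\<lambda>n. diameter (tail_window \<beta> \<alpha> \<eta> \<theta> n) \<le> \<delta>) sequentially"
    using order_tendstoD(2)[OF tail_radius_tendsto_0[OF \<theta>(1)] \<theta>(1)]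
  proof eventually_elim
    case (elim n)
    then show ?case using \<theta> \<delta> by (auto simp: tail_window_def)
  qed
  have "hausdorff_pre s \<delta> (\<Inter>N. \<Union>n\<in>{N..}. A_set \<beta> \<alpha> \<eta> n)
      \<le> ennreal (diameter {0..2*\<theta>} powr s + diameter {1 - 2*\<theta>..1} powr s)"
    by (rule hausdorff_pre_limsup_le[OF s limsup_A_subset[OF \<theta>(1)] _ _ _ _ _
          windows_small tail_window_summable[OF \<theta>(1) s]])
      (use \<theta> in \<open>auto simp: tail_window_def\<close>)
  also have "\<dots> \<le> ennreal e"
    using \<theta> \<theta>_small by (intro ennreal_leI) simp
  finally show "hausdorff_pre s \<delta> (\<Inter>N. \<Union>n\<in>{N..}. A_set \<beta> \<alpha> \<eta> n) \<le> ennreal e" .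
qed

end

theorem lemma4p18:
  fixes \<alpha> \<beta> \<eta> :: real
  assumes "0 < \<alpha>" and "\<alpha> < 1"
    and "0 \<le> \<beta>" and "\<beta> \<le> 1" and "\<beta> \<notin> \<rat>"
    and "0 < \<eta>"
  shows "hausdorff_dim (\<Inter>N. \<Union>n\<in>{N..}. A_set \<beta> \<alpha> \<eta> n) = 0"
  using limsup_A_hausdorff_null[of \<alpha> \<beta> \<eta>] assms by (intro hausdorff_dim_eq_0I) simp

end
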